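(* Let $\mu_1>\mu_2\ge\dots\ge\mu_K$ and $\sigma_1,\dots,\sigma_K>0$, and let $w^*=\arg\max_{w\in\mathcal{W}}\min_{a\neq1}\frac{(\mu_1-\mu_a)^2}{2(\sigma_1^2/w_1+\sigma_a^2/w_a)}$. For $a\ge2$ define $\psi_a(y)=\frac{(\mu_1-\mu_a)^2-2y\sigma_1^2}{2\sigma_a^2y}$. Then \[ w_1^*=\frac{1}{1+\sum_{i\ge2}1/\psi_i(y^* )},\qquad w_a^*=\frac{1/\psi_a(y^* )}{1+\sum_{i\ge2}1/\psi_i(y^* )}\quad(a\ge2), \] where $y^*$ is the unique solution of $\sum_{a\ge2}\frac{\sigma_1^2}{\sigma_a^2\psi_a(y)^2}=1$. Moreover, $F(y)=\sum_{a\ge2}\frac{\sigma_1^2}{\sigma_a^2\psi_a(y)^2}$, defined on $(0,(\mu_1-\mu_2)^2/(2\sigma_1^2)]$, is strictly increasing with $\lim_{y\to0}F(y)=0$ and $\lim_{y\to(\mu_1-\mu_2)^2/(2\sigma_1^2)}F(y)=\infty$.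
   Context: $K\ge2$; $\mathcal{W}=\{w\in\mathbb{R}_+^K:\sum_{a=1}^Kw_a=1\}$ is the probability simplex. *)

theory Defs
  imports "HOL-Analysis.Analysis"
begin

text \<open>Arms are indexed by 1..K; weights, means and standard deviations are
functions nat => real whose values outside {1..K} are irrelevant.\<close>

definition prob_simplex :: "nat \<Rightarrow> (nat \<Rightarrow> real) set" where
  "prob_simplex K = {w. (\<forall>a\<in>{1..K}. 0 \<le> w a) \<and> (\<Sum>a=1..K. w a) = 1}"

text \<open>The term (mu_1-mu_a)^2 / (2 (sigma_1^2/w_1 + sigma_a^2/w_a)), with the
usual extended-real convention sigma^2/0 = infinity, i.e. the term is 0
whenever w_1 = 0 or w_a = 0.\<close>

definition gap_term :: "(nat \<Rightarrow> real) \<Rightarrow> (nat \<Rightarrow> real) \<Rightarrow> (nat \<Rightarrow> real) \<Rightarrow> nat \<Rightarrow> real" where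
  "gap_term \<mu> \<sigma> w a =
     (if 0 < w 1 \<and> 0 < w a
      then (\<mu> 1 - \<mu> a)\<^sup>2 / (2 * ((\<sigma> 1)\<^sup>2 / w 1 + (\<sigma> a)\<^sup>2 / w a))
      else 0)"

definition objective :: "nat \<Rightarrow> (nat \<Rightarrow> real) \<Rightarrow> (nat \<Rightarrow> real) \<Rightarrow> (nat \<Rightarrow> real) \<Rightarrow> real" where
  "objective K \<mu> \<sigma> w = Min ((gap_term \<mu> \<sigma> w) ` {2..K})"

definition is_optimal :: "nat \<Rightarrow> (nat \<Rightarrow> real) \<Rightarrow> (nat \<Rightarrow> real) \<Rightarrow> (nat \<Rightarrow> real) \<Rightarrow> bool" where
  "is_optimal K \<mu> \<sigma> w \<longleftrightarrow>
     w \<in> prob_simplex K \<and> (\<forall>v\<in>prob_simplex K. objective K \<mu> \<sigma> v \<le> objective K \<mu> \<sigma> w)"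

definition psi :: "(nat \<Rightarrow> real) \<Rightarrow> (nat \<Rightarrow> real) \<Rightarrow> nat \<Rightarrow> real \<Rightarrow> real" where
  "psi \<mu> \<sigma> a y = ((\<mu> 1 - \<mu> a)\<^sup>2 - 2 * y * (\<sigma> 1)\<^sup>2) / (2 * (\<sigma> a)\<^sup>2 * y)"

definition Fsum :: "nat \<Rightarrow> (nat \<Rightarrow> real) \<Rightarrow> (nat \<Rightarrow> real) \<Rightarrow> real \<Rightarrow> real" where
  "Fsum K \<mu> \<sigma> y = (\<Sum>a=2..K. (\<sigma> 1)\<^sup>2 / ((\<sigma> a)\<^sup>2 * (psi \<mu> \<sigma> a y)\<^sup>2))"

end

(*
  Fix y with psi_a(y) > 0 for all a >= 2 and write t_a = psi_a(y), p = sigma_1^2, q_a = sigma_a^2.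
  Since (mu_1 - mu_a)^2 = 2 y (p + q_a t_a), the Cauchy-Schwarz inequality
  (p + q t)^2 <= (p/x + q/z) (p x + q t^2 z) turns each gap term into a linear bound
    gap_a(w) (p/(q_a t_a^2) + 1/t_a) <= y (p/(q_a t_a^2) w_1 + w_a),
  with equality iff w_1 = t_a w_a. If F(y) = 1, the right-hand sides add up to
  y (w_1 + ... + w_K) = y and the factors on the left to S = 1 + sum_a 1/t_a, so
  min_a gap_a(w) <= y / S on the simplex. The weights w_1 = 1/S, w_a = 1/(t_a S) attain this,
  and a maximiser makes every linear bound tight, which forces w_1 = t_a w_a.

  The a-th term of F is 4 p q_a y^2 / ((mu_1 - mu_a)^2 - 2 y p)^2: it increases on (0, b)
  because psi_a decreases, it vanishes at 0, and for a = 2 it blows up at b. Continuity and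
  the intermediate value theorem then give the unique root of F = 1.
*)

theory Submission
  imports Defs
begin

lemma cauchy_schwarz_two_defect:
  fixes p q t x z :: real
  assumes "x > 0" "z > 0"
  shows "(p/x + q/z) * (p*x + q*t^2*z) - (p + q*t)^2 = p*q*(x - t*z)^2/(x*z)"
  using assms by (simp add: field_simps power2_eq_square)

lemma sum_atLeast_1_split:
  fixes f :: "nat \<Rightarrow> 'a::comm_monoid_add"
  assumes "1 \<le> K"
  shows "(\<Sum>a=1..K. f a) = f 1 + (\<Sum>a=2..K. f a)"
  using sum.atLeast_Suc_atMost[OF assms, of f] by (simp add: numeral_2_eq_2)

lemma decreasing_steps_le_start:
  fixes f :: "nat \<Rightarrow> 'a::order"
  assumes "\<forall>i\<in>{m..<n}. f (Suc i) \<le> f i" "j \<in> {m..n}"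
  shows "f j \<le> f m"
proof -
  have "m \<le> j" "j \<le> n"
    using assms(2) by auto
  then show ?thesis
  proof (induction j rule: dec_induct)
    case base
    then show ?case by simp
  next
    case (step k)
    then have "f (Suc k) \<le> f k"
      using assms(1) by simp
    also have "f k \<le> f m"
      using step by simp
    finally show ?case .
  qed
qed

lemma strict_mono_on_ex1_crossing:
  fixes f :: "real \<Rightarrow> real"
  assumes "a < b" "continuous_on {a..<b} f" "strict_mono_on {a<..<b} f"
    and "filterlim f at_top (at_left b)" "f a < c"
  shows "\<exists>!y. y \<in> {a<..<b} \<and> f y = c"
proof -
  have "eventually (\<lambda>y. c \<le> f y \<and> y \<in> {a<..<b}) (at_left b)"
    using assms(4) eventually_at_left_real[OF assms(1)]
    by (auto simp: filterlim_at_top intro: eventually_conj)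
  then obtain y1 where y1: "c \<le> f y1" "y1 \<in> {a<..<b}"
    using eventually_happens'[of "at_left b"] by auto
  moreover have "continuous_on {a..y1} f"
    using y1 by (auto intro: continuous_on_subset[OF assms(2)])
  ultimately obtain y where "a \<le> y" "y \<le> y1" "f y = c"
    using IVT'[of f a c y1] assms(5) by auto
  moreover have "y \<noteq> a"
    using \<open>f y = c\<close> assms(5) by auto
  ultimately have "y \<in> {a<..<b}" "f y = c"
    using y1 by auto
  then show ?thesis
    using strict_mono_on_eqD[OF assms(3)] by blast
qed

definition Fsum_term :: "(nat \<Rightarrow> real) \<Rightarrow> (nat \<Rightarrow> real) \<Rightarrow> nat \<Rightarrow> real \<Rightarrow> real" where
  "Fsum_term \<mu> \<sigma> a y = (\<sigma> 1)\<^sup>2 / ((\<sigma> a)\<^sup>2 * (psi \<mu> \<sigma> a y)\<^sup>2)"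

lemma Fsum_eq_sum_Fsum_term: "Fsum K \<mu> \<sigma> y = (\<Sum>a=2..K. Fsum_term \<mu> \<sigma> a y)"
  unfolding Fsum_def Fsum_term_def ..

lemma Fsum_term_nonneg: "0 \<le> Fsum_term \<mu> \<sigma> a y"
  by (simp add: Fsum_term_def)

lemma psi_pos:
  assumes "\<sigma> a \<noteq> 0" "y > 0" "2 * y * (\<sigma> 1)\<^sup>2 < (\<mu> 1 - \<mu> a)\<^sup>2"
  shows "psi \<mu> \<sigma> a y > 0"
  using assms unfolding psi_def by (simp add: field_simps)

lemma psi_strict_antimono:
  assumes "\<sigma> a \<noteq> 0" "0 < x" "x < y" "0 < (\<mu> 1 - \<mu> a)\<^sup>2"
  shows "psi \<mu> \<sigma> a y < psi \<mu> \<sigma> a x"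
  using assms by (simp add: psi_def field_simps)

lemma Fsum_term_closed_form:
  assumes "\<sigma> a \<noteq> 0"
  shows "Fsum_term \<mu> \<sigma> a y
    = 4 * (\<sigma> 1)\<^sup>2 * (\<sigma> a)\<^sup>2 * y\<^sup>2 / ((\<mu> 1 - \<mu> a)\<^sup>2 - 2 * y * (\<sigma> 1)\<^sup>2)\<^sup>2"
proof (cases "y = 0 \<or> (\<mu> 1 - \<mu> a)\<^sup>2 - 2 * y * (\<sigma> 1)\<^sup>2 = 0")
  case True
  then show ?thesis
    by (auto simp: Fsum_term_def psi_def)
next
  case False
  define N where "N = (\<mu> 1 - \<mu> a)\<^sup>2 - 2 * y * (\<sigma> 1)\<^sup>2"
  have "y \<noteq> 0" "N \<noteq> 0"
    using False by (simp_all add: N_def)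
  have "Fsum_term \<mu> \<sigma> a y = (\<sigma> 1)\<^sup>2 / ((\<sigma> a)\<^sup>2 * (N / (2 * (\<sigma> a)\<^sup>2 * y))\<^sup>2)"
    by (simp add: Fsum_term_def psi_def N_def)
  also have "\<dots> = 4 * (\<sigma> 1)\<^sup>2 * (\<sigma> a)\<^sup>2 * y\<^sup>2 / N\<^sup>2"
    using \<open>y \<noteq> 0\<close> \<open>N \<noteq> 0\<close> assms by (simp add: field_simps power2_eq_square)
  finally show ?thesis
    by (simp add: N_def)
qed

(* psi divides by y, so at y = 0 every term is sigma_1^2 / 0 = 0. *)
lemma Fsum_at_0: "Fsum K \<mu> \<sigma> 0 = 0"
  by (simp add: Fsum_def psi_def)

lemma Fsum_term_strict_mono_on:
  assumes "\<sigma> 1 \<noteq> 0" "\<sigma> a \<noteq> 0" "2 * b * (\<sigma> 1)\<^sup>2 \<le> (\<mu> 1 - \<mu> a)\<^sup>2"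
  shows "strict_mono_on {0<..<b} (Fsum_term \<mu> \<sigma> a)"
proof (rule strict_mono_onI)
  fix x y assume x: "x \<in> {0<..<b}" and y: "y \<in> {0<..<b}" and "x < y"
  have "0 < 2 * y * (\<sigma> 1)\<^sup>2" "2 * y * (\<sigma> 1)\<^sup>2 < 2 * b * (\<sigma> 1)\<^sup>2"
    using y assms(1) by simp_all
  then have "2 * y * (\<sigma> 1)\<^sup>2 < (\<mu> 1 - \<mu> a)\<^sup>2" "0 < (\<mu> 1 - \<mu> a)\<^sup>2"
    using assms(3) by linarith+
  then have "0 < psi \<mu> \<sigma> a y" "psi \<mu> \<sigma> a y < psi \<mu> \<sigma> a x"
    using x y \<open>x < y\<close> assms(2) by (auto intro: psi_pos psi_strict_antimono)
  then have "(psi \<mu> \<sigma> a y)\<^sup>2 < (psi \<mu> \<sigma> a x)\<^sup>2"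
    by (simp add: power_strict_mono)
  moreover have "0 < psi \<mu> \<sigma> a x"
    using \<open>0 < psi \<mu> \<sigma> a y\<close> \<open>psi \<mu> \<sigma> a y < psi \<mu> \<sigma> a x\<close> by linarith
  ultimately show "Fsum_term \<mu> \<sigma> a x < Fsum_term \<mu> \<sigma> a y"
    unfolding Fsum_term_def using assms \<open>0 < psi \<mu> \<sigma> a y\<close>
    by (intro divide_strict_left_mono) auto
qed

lemma Fsum_strict_mono_on:
  assumes "2 \<le> K" "\<And>a. a \<in> {1..K} \<Longrightarrow> \<sigma> a \<noteq> 0"
    and "\<And>a. a \<in> {2..K} \<Longrightarrow> 2 * b * (\<sigma> 1)\<^sup>2 \<le> (\<mu> 1 - \<mu> a)\<^sup>2"
  shows "strict_mono_on {0<..<b} (Fsum K \<mu> \<sigma>)"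
proof (rule strict_mono_onI)
  fix x y assume "x \<in> {0<..<b}" "y \<in> {0<..<b}" "x < y"
  then have "Fsum_term \<mu> \<sigma> a x < Fsum_term \<mu> \<sigma> a y" if "a \<in> {2..K}" for a
    using that assms Fsum_term_strict_mono_on[of \<sigma> a b \<mu>] by (simp add: strict_mono_onD)
  then show "Fsum K \<mu> \<sigma> x < Fsum K \<mu> \<sigma> y"
    unfolding Fsum_eq_sum_Fsum_term using assms(1) by (intro sum_strict_mono) auto
qed

lemma continuous_on_Fsum:
  assumes "\<And>a. a \<in> {1..K} \<Longrightarrow> \<sigma> a \<noteq> 0"
    and "\<And>a. a \<in> {2..K} \<Longrightarrow> 2 * b * (\<sigma> 1)\<^sup>2 \<le> (\<mu> 1 - \<mu> a)\<^sup>2"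
  shows "continuous_on {0..<b} (Fsum K \<mu> \<sigma>)"
proof -
  have "Fsum K \<mu> \<sigma> = (\<lambda>y. \<Sum>a=2..K.
      4 * (\<sigma> 1)\<^sup>2 * (\<sigma> a)\<^sup>2 * y\<^sup>2 / ((\<mu> 1 - \<mu> a)\<^sup>2 - 2 * y * (\<sigma> 1)\<^sup>2)\<^sup>2)"
    using assms(1) by (auto simp: Fsum_eq_sum_Fsum_term Fsum_term_closed_form intro!: sum.cong)
  moreover have "(\<mu> 1 - \<mu> a)\<^sup>2 - 2 * y * (\<sigma> 1)\<^sup>2 \<noteq> 0" if "a \<in> {2..K}" "y \<in> {0..<b}" for a y
  proof -
    have "\<sigma> 1 \<noteq> 0"
      using assms(1) that(1) by auto
    then have "2 * y * (\<sigma> 1)\<^sup>2 < 2 * b * (\<sigma> 1)\<^sup>2"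
      using that(2) by simp
    then show ?thesis
      using assms(2)[OF that(1)] by simp
  qed
  ultimately show ?thesis
    by (auto intro!: continuous_intros)
qed

lemma Fsum_term_at_top:
  assumes "\<sigma> 1 \<noteq> 0" "\<sigma> a \<noteq> 0" "0 < b" "2 * b * (\<sigma> 1)\<^sup>2 = (\<mu> 1 - \<mu> a)\<^sup>2"
  shows "filterlim (Fsum_term \<mu> \<sigma> a) at_top (at_left b)"
proof -
  define N where "N y = ((\<mu> 1 - \<mu> a)\<^sup>2 - 2 * y * (\<sigma> 1)\<^sup>2)\<^sup>2" for y
  have closed_form: "Fsum_term \<mu> \<sigma> a = (\<lambda>y. 4 * (\<sigma> 1)\<^sup>2 * (\<sigma> a)\<^sup>2 * y\<^sup>2 * inverse (N y))"
    using assms(2) by (auto simp: Fsum_term_closed_form N_def divide_inverse)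
  have N_to_0: "(N \<longlongrightarrow> 0) (at_left b)"
  proof -
    have "(N \<longlongrightarrow> ((\<mu> 1 - \<mu> a)\<^sup>2 - 2 * b * (\<sigma> 1)\<^sup>2)\<^sup>2) (at_left b)"
      unfolding N_def by (intro tendsto_intros)
    then show ?thesis
      using assms(4) by simp
  qed
  have N_pos: "eventually (\<lambda>y. 0 < N y) (at_left b)"
    using eventually_at_left_real[OF assms(3)]
  proof eventually_elim
    case (elim y)
    then have "2 * y * (\<sigma> 1)\<^sup>2 < 2 * b * (\<sigma> 1)\<^sup>2"
      using assms(1) by simp
    then show ?case
      using assms(4) by (simp add: N_def)
  qed
  have "((\<lambda>y. 4 * (\<sigma> 1)\<^sup>2 * (\<sigma> a)\<^sup>2 * y\<^sup>2) \<longlongrightarrow> 4 * (\<sigma> 1)\<^sup>2 * (\<sigma> a)\<^sup>2 * b\<^sup>2) (at_left b)"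
    by (intro tendsto_intros)
  from this _ filterlim_inverse_at_top[OF N_to_0 N_pos]
  show ?thesis
    unfolding closed_form by (rule filterlim_tendsto_pos_mult_at_top) (use assms(1-3) in simp)
qed

lemma Fsum_at_top:
  assumes "a \<in> {2..K}" "\<sigma> 1 \<noteq> 0" "\<sigma> a \<noteq> 0" "0 < b" "2 * b * (\<sigma> 1)\<^sup>2 = (\<mu> 1 - \<mu> a)\<^sup>2"
  shows "filterlim (Fsum K \<mu> \<sigma>) at_top (at_left b)"
proof (rule filterlim_at_top_mono[OF Fsum_term_at_top[OF assms(2-5)]])
  show "\<forall>\<^sub>F y in at_left b. Fsum_term \<mu> \<sigma> a y \<le> Fsum K \<mu> \<sigma> y"
    unfolding Fsum_eq_sum_Fsum_term using assms(1)
    by (intro always_eventually allI member_le_sum Fsum_term_nonneg) auto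
qed

lemma Fsum_tendsto_0:
  assumes "0 < b" "\<And>a. a \<in> {1..K} \<Longrightarrow> \<sigma> a \<noteq> 0"
    and "\<And>a. a \<in> {2..K} \<Longrightarrow> 2 * b * (\<sigma> 1)\<^sup>2 \<le> (\<mu> 1 - \<mu> a)\<^sup>2"
  shows "(Fsum K \<mu> \<sigma> \<longlongrightarrow> 0) (at_right 0)"
proof -
  have "continuous_on {0..b/2} (Fsum K \<mu> \<sigma>)"
    using continuous_on_Fsum[of K \<sigma> b \<mu>, OF assms(2,3)] by (rule continuous_on_subset) (use assms(1) in auto)
  then have "(Fsum K \<mu> \<sigma> \<longlongrightarrow> Fsum K \<mu> \<sigma> 0) (at_right 0)"
    using assms(1) continuous_on_Icc_at_rightD[of 0 "b/2" "Fsum K \<mu> \<sigma>"] by simp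
  then show ?thesis
    by (simp add: Fsum_at_0)
qed

lemma gap_term_eq_psi:
  assumes "\<sigma> a \<noteq> 0" "y > 0" "v 1 > 0" "v a > 0"
  shows "gap_term \<mu> \<sigma> v a
    = y * ((\<sigma> 1)\<^sup>2 + (\<sigma> a)\<^sup>2 * psi \<mu> \<sigma> a y) / ((\<sigma> 1)\<^sup>2 / v 1 + (\<sigma> a)\<^sup>2 / v a)"
  using assms unfolding gap_term_def psi_def by (simp add: field_simps)

(* gap_term is concave and 1-homogeneous in (v 1, v a); up to a positive factor, the left-hand
   side is how far it lies below its supporting hyperplane along the ray v 1 = psi * v a. *)
lemma gap_term_tangent_defect:
  assumes "\<sigma> 1 \<noteq> 0" "\<sigma> a \<noteq> 0" "y > 0" "psi \<mu> \<sigma> a y > 0" "v 1 > 0" "v a > 0"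
  defines "t \<equiv> psi \<mu> \<sigma> a y"
  shows "y * (Fsum_term \<mu> \<sigma> a y * v 1 + v a) - gap_term \<mu> \<sigma> v a * (Fsum_term \<mu> \<sigma> a y + 1 / t)
    = y * (\<sigma> 1)\<^sup>2 * (v 1 - t * v a)\<^sup>2
      / (t\<^sup>2 * ((\<sigma> 1)\<^sup>2 * v a + (\<sigma> a)\<^sup>2 * v 1))"
proof -
  define p q x z where "p = (\<sigma> 1)\<^sup>2" "q = (\<sigma> a)\<^sup>2" "x = v 1" "z = v a"
  have pos: "p > 0" "q > 0" "t > 0" "x > 0" "z > 0"
    using assms by (auto simp: p_q_x_z_def)
  define D where "D = p/x + q/z"
  have "D > 0"
    using pos by (simp add: D_def add_pos_pos)
  have gap: "gap_term \<mu> \<sigma> v a = y * (p + q * t) / D"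
    using gap_term_eq_psi[of \<sigma> a y v \<mu>] assms by (simp add: p_q_x_z_def t_def D_def)
  have "y * (p / (q * t\<^sup>2) * x + z) - y * (p + q * t) / D * (p / (q * t\<^sup>2) + 1 / t)
      = y / (q * t\<^sup>2 * D) * (D * (p*x + q*t\<^sup>2*z) - (p + q*t)\<^sup>2)"
    using pos \<open>D > 0\<close> by (simp add: field_simps power2_eq_square)
  also have "\<dots> = y / (q * t\<^sup>2 * D) * (p * q * (x - t * z)\<^sup>2 / (x * z))"
    using pos unfolding D_def by (simp only: cauchy_schwarz_two_defect)
  also have "\<dots> = q * (y * p * (x - t * z)\<^sup>2) / (q * (t\<^sup>2 * (D * (x * z))))"
    by (simp add: times_divide_times_eq ac_simps)
  also have "D * (x * z) = p * z + q * x"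
    using pos by (simp add: D_def field_simps)
  also have "q * (y * p * (x - t * z)\<^sup>2) / (q * (t\<^sup>2 * (p * z + q * x)))
      = y * p * (x - t * z)\<^sup>2 / (t\<^sup>2 * (p * z + q * x))"
    using pos by simp
  finally show ?thesis by (simp add: gap Fsum_term_def p_q_x_z_def t_def)
qed

lemma gap_term_tangent_bound:
  assumes "\<sigma> 1 \<noteq> 0" "\<sigma> a \<noteq> 0" "y > 0" "psi \<mu> \<sigma> a y > 0" "v 1 \<ge> 0" "v a \<ge> 0"
  shows "gap_term \<mu> \<sigma> v a * (Fsum_term \<mu> \<sigma> a y + 1 / psi \<mu> \<sigma> a y)
    \<le> y * (Fsum_term \<mu> \<sigma> a y * v 1 + v a)"
proof (cases "v 1 > 0 \<and> v a > 0")
  case True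
  have "y * (Fsum_term \<mu> \<sigma> a y * v 1 + v a)
      - gap_term \<mu> \<sigma> v a * (Fsum_term \<mu> \<sigma> a y + 1 / psi \<mu> \<sigma> a y)
    = y * (\<sigma> 1)\<^sup>2 * (v 1 - psi \<mu> \<sigma> a y * v a)\<^sup>2
      / ((psi \<mu> \<sigma> a y)\<^sup>2 * ((\<sigma> 1)\<^sup>2 * v a + (\<sigma> a)\<^sup>2 * v 1))"
    using assms True by (intro gap_term_tangent_defect) auto
  moreover have "0 \<le> y * (\<sigma> 1)\<^sup>2 * (v 1 - psi \<mu> \<sigma> a y * v a)\<^sup>2
      / ((psi \<mu> \<sigma> a y)\<^sup>2 * ((\<sigma> 1)\<^sup>2 * v a + (\<sigma> a)\<^sup>2 * v 1))"
    using assms True by simp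
  ultimately show ?thesis
    by linarith
next
  case False
  then have "gap_term \<mu> \<sigma> v a = 0"
    by (auto simp: gap_term_def)
  then show ?thesis
    using assms Fsum_term_nonneg[of \<mu> \<sigma> a y] by simp
qed

lemma gap_term_tangent_eqD:
  assumes "\<sigma> 1 \<noteq> 0" "\<sigma> a \<noteq> 0" "y > 0" "psi \<mu> \<sigma> a y > 0" "v 1 > 0" "v a > 0"
    and "gap_term \<mu> \<sigma> v a * (Fsum_term \<mu> \<sigma> a y + 1 / psi \<mu> \<sigma> a y)
      = y * (Fsum_term \<mu> \<sigma> a y * v 1 + v a)"
  shows "v 1 = psi \<mu> \<sigma> a y * v a"
proof -
  have "(\<sigma> 1)\<^sup>2 * v a + (\<sigma> a)\<^sup>2 * v 1 > 0"
    using assms by (simp add: add_pos_pos)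
  then have "y * (\<sigma> 1)\<^sup>2 * (v 1 - psi \<mu> \<sigma> a y * v a)\<^sup>2 = 0"
    using gap_term_tangent_defect[of \<sigma> a y \<mu> v] assms by simp
  then show ?thesis
    using assms by simp
qed

lemma gap_term_psi_ratio:
  assumes "\<sigma> a \<noteq> 0" "y > 0" "psi \<mu> \<sigma> a y > 0" "v a > 0" "v 1 = psi \<mu> \<sigma> a y * v a"
  shows "gap_term \<mu> \<sigma> v a = y * v 1"
proof -
  define p q t where "p = (\<sigma> 1)\<^sup>2" "q = (\<sigma> a)\<^sup>2" "t = psi \<mu> \<sigma> a y"
  have "p + q * t > 0"
    using assms by (simp add: p_q_t_def add_nonneg_pos)
  have "p / v 1 + q / v a = (p + q * t) / v 1"
    using assms by (simp add: p_q_t_def field_simps)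
  then have "gap_term \<mu> \<sigma> v a = y * (p + q * t) / ((p + q * t) / v 1)"
    using assms gap_term_eq_psi[of \<sigma> a y v \<mu>] by (simp add: p_q_t_def)
  then show ?thesis
    using \<open>p + q * t > 0\<close> by simp
qed

lemma objective_le_gap_term:
  "a \<in> {2..K} \<Longrightarrow> objective K \<mu> \<sigma> v \<le> gap_term \<mu> \<sigma> v a"
  unfolding objective_def by (intro Min_le) auto

locale Fsum_root =
  fixes K :: nat and \<mu> \<sigma> :: "nat \<Rightarrow> real" and y :: real
  assumes two_le_K: "2 \<le> K"
    and sigma_pos: "\<And>a. a \<in> {1..K} \<Longrightarrow> \<sigma> a > 0"
    and y_pos: "y > 0"
    and pos_psi: "\<And>a. a \<in> {2..K} \<Longrightarrow> psi \<mu> \<sigma> a y > 0"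
    and Fsum_eq_1: "Fsum K \<mu> \<sigma> y = 1"
begin

definition psi_norm :: real where
  "psi_norm = 1 + (\<Sum>i=2..K. 1 / psi \<mu> \<sigma> i y)"

definition opt_weights :: "nat \<Rightarrow> real" where
  "opt_weights a = (if a = 1 then 1 else 1 / psi \<mu> \<sigma> a y) / psi_norm"

definition tangent_weight :: "nat \<Rightarrow> real" where
  "tangent_weight a = Fsum_term \<mu> \<sigma> a y + 1 / psi \<mu> \<sigma> a y"

definition tangent_bound :: "(nat \<Rightarrow> real) \<Rightarrow> nat \<Rightarrow> real" where
  "tangent_bound v a = y * (Fsum_term \<mu> \<sigma> a y * v 1 + v a)"

lemma sigma_ne_0: "a \<in> {1..K} \<Longrightarrow> \<sigma> a \<noteq> 0"
  using sigma_pos by force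

lemma psi_norm_pos: "psi_norm > 0"
proof -
  have "0 \<le> (\<Sum>i=2..K. 1 / psi \<mu> \<sigma> i y)"
    using pos_psi by (intro sum_nonneg) (simp add: less_imp_le)
  then show ?thesis
    by (simp add: psi_norm_def)
qed

lemma tangent_weight_nonneg: "a \<in> {2..K} \<Longrightarrow> 0 \<le> tangent_weight a"
  using pos_psi Fsum_term_nonneg[of \<mu> \<sigma> a y] by (simp add: tangent_weight_def less_imp_le)

lemma sum_tangent_weight: "(\<Sum>a=2..K. tangent_weight a) = psi_norm"
  using Fsum_eq_1 by (simp add: tangent_weight_def sum.distrib psi_norm_def Fsum_eq_sum_Fsum_term)

lemma sum_tangent_bound:
  assumes "v \<in> prob_simplex K"
  shows "(\<Sum>a=2..K. tangent_bound v a) = y"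
proof -
  have "(\<Sum>a=2..K. tangent_bound v a) = y * (Fsum K \<mu> \<sigma> y * v 1 + (\<Sum>a=2..K. v a))"
    by (simp add: tangent_bound_def Fsum_eq_sum_Fsum_term distrib_left sum.distrib
        sum_distrib_left sum_distrib_right)
  also have "\<dots> = y * (\<Sum>a=1..K. v a)"
    using two_le_K sum_atLeast_1_split[of K v] by (simp add: Fsum_eq_1)
  finally show ?thesis
    using assms by (simp add: prob_simplex_def)
qed

lemma tangent_weight_gap_term_le:
  assumes "v \<in> prob_simplex K" "a \<in> {2..K}"
  shows "tangent_weight a * gap_term \<mu> \<sigma> v a \<le> tangent_bound v a"
proof -
  have "v 1 \<ge> 0" "v a \<ge> 0"
    using assms two_le_K by (auto simp: prob_simplex_def)
  then show ?thesis
    using gap_term_tangent_bound[of \<sigma> a y \<mu> v] assms two_le_K sigma_ne_0 pos_psi y_pos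
    by (simp add: tangent_weight_def tangent_bound_def mult.commute)
qed

lemma opt_weights_in_simplex: "opt_weights \<in> prob_simplex K"
proof -
  have "(\<Sum>a=2..K. opt_weights a) = (\<Sum>a=2..K. 1 / psi \<mu> \<sigma> a y) / psi_norm"
    unfolding sum_divide_distrib by (intro sum.cong) (auto simp: opt_weights_def)
  then have "(\<Sum>a=1..K. opt_weights a) = (1 + (\<Sum>a=2..K. 1 / psi \<mu> \<sigma> a y)) / psi_norm"
    using two_le_K sum_atLeast_1_split[of K opt_weights] by (simp add: opt_weights_def add_divide_distrib)
  also have "\<dots> = 1"
    using psi_norm_pos by (simp add: psi_norm_def)
  finally show ?thesis
    using psi_norm_pos pos_psi by (auto simp: prob_simplex_def opt_weights_def less_imp_le)
qed

lemma gap_term_opt_weights: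
  assumes "a \<in> {2..K}"
  shows "gap_term \<mu> \<sigma> opt_weights a = y / psi_norm"
proof -
  have "opt_weights 1 = psi \<mu> \<sigma> a y * opt_weights a" "opt_weights a > 0"
    using assms pos_psi[OF assms] psi_norm_pos by (auto simp: opt_weights_def)
  then have "gap_term \<mu> \<sigma> opt_weights a = y * opt_weights 1"
    using assms by (intro gap_term_psi_ratio y_pos pos_psi sigma_ne_0) auto
  then show ?thesis
    by (simp add: opt_weights_def)
qed

lemma objective_opt_weights: "objective K \<mu> \<sigma> opt_weights = y / psi_norm"
proof -
  have "gap_term \<mu> \<sigma> opt_weights ` {2..K} = {y / psi_norm}"
    using two_le_K gap_term_opt_weights by force
  then show ?thesis
    by (simp add: objective_def)
qed

lemma objective_le:
  assumes v: "v \<in> prob_simplex K"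
  shows "objective K \<mu> \<sigma> v \<le> y / psi_norm"
proof -
  have "objective K \<mu> \<sigma> v * psi_norm = (\<Sum>a=2..K. tangent_weight a * objective K \<mu> \<sigma> v)"
    by (simp only: sum_tangent_weight[symmetric] mult.commute[of "objective K \<mu> \<sigma> v"]
        sum_distrib_right)
  also have "\<dots> \<le> (\<Sum>a=2..K. tangent_weight a * gap_term \<mu> \<sigma> v a)"
    using objective_le_gap_term tangent_weight_nonneg by (intro sum_mono mult_left_mono) auto
  also have "\<dots> \<le> (\<Sum>a=2..K. tangent_bound v a)"
    using v by (intro sum_mono tangent_weight_gap_term_le)
  also have "\<dots> = y"
    using v by (rule sum_tangent_bound)
  finally show ?thesis
    using psi_norm_pos by (simp add: field_simps)
qed

lemma is_optimal_opt_weights: "is_optimal K \<mu> \<sigma> opt_weights"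
  unfolding is_optimal_def using opt_weights_in_simplex objective_le objective_opt_weights by simp

lemma optimal_tangent_tight:
  assumes opt: "is_optimal K \<mu> \<sigma> v" and a: "a \<in> {2..K}"
  shows "tangent_weight a * gap_term \<mu> \<sigma> v a = tangent_bound v a"
    and "y / psi_norm \<le> gap_term \<mu> \<sigma> v a"
proof -
  have v: "v \<in> prob_simplex K"
    using opt by (simp add: is_optimal_def)
  have "y / psi_norm \<le> objective K \<mu> \<sigma> v"
    using opt opt_weights_in_simplex unfolding is_optimal_def objective_opt_weights[symmetric]
    by blast
  then have objective_v: "objective K \<mu> \<sigma> v = y / psi_norm"
    using objective_le[OF v] by simp
  then have gap_ge: "y / psi_norm \<le> gap_term \<mu> \<sigma> v b" if "b \<in> {2..K}" for b
    using objective_le_gap_term[OF that] by metis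
  then show "y / psi_norm \<le> gap_term \<mu> \<sigma> v a"
    using a .
  have "(\<Sum>b=2..K. tangent_bound v b - tangent_weight b * gap_term \<mu> \<sigma> v b)
      = y - (\<Sum>b=2..K. tangent_weight b * gap_term \<mu> \<sigma> v b)"
    using v by (simp add: sum_subtractf sum_tangent_bound)
  also have "\<dots> \<le> y - (\<Sum>b=2..K. tangent_weight b * (y / psi_norm))"
    using gap_ge tangent_weight_nonneg
    by (intro diff_left_mono sum_mono mult_left_mono) auto
  also have "\<dots> = 0"
    unfolding sum_distrib_right[symmetric] sum_tangent_weight using psi_norm_pos by simp
  finally have "(\<Sum>b=2..K. tangent_bound v b - tangent_weight b * gap_term \<mu> \<sigma> v b) = 0"
    using v tangent_weight_gap_term_le by (intro order_antisym sum_nonneg) auto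
  then show "tangent_weight a * gap_term \<mu> \<sigma> v a = tangent_bound v a"
    using v a tangent_weight_gap_term_le by (subst (asm) sum_nonneg_eq_0_iff) auto
qed

lemma optimal_eq_opt_weights:
  assumes opt: "is_optimal K \<mu> \<sigma> v" and a: "a \<in> {1..K}"
  shows "v a = opt_weights a"
proof -
  have ratio: "v 1 = psi \<mu> \<sigma> b y * v b" if b: "b \<in> {2..K}" for b
  proof -
    have "gap_term \<mu> \<sigma> v b > 0"
      using optimal_tangent_tight(2)[OF opt b] y_pos psi_norm_pos by (meson divide_pos_pos less_le_trans)
    then have "v 1 > 0" "v b > 0"
      by (auto simp: gap_term_def split: if_splits)
    then show ?thesis
      using optimal_tangent_tight(1)[OF opt b] b two_le_K
      by (intro gap_term_tangent_eqD sigma_ne_0 y_pos pos_psi)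
        (auto simp: tangent_weight_def tangent_bound_def mult.commute)
  qed
  have "1 = (\<Sum>b=1..K. v b)"
    using opt by (simp add: is_optimal_def prob_simplex_def)
  also have "\<dots> = v 1 + (\<Sum>b=2..K. v b)"
    using two_le_K by (intro sum_atLeast_1_split) simp
  also have "(\<Sum>b=2..K. v b) = (\<Sum>b=2..K. v 1 * (1 / psi \<mu> \<sigma> b y))"
  proof (intro sum.cong refl)
    fix b assume "b \<in> {2..K}"
    then show "v b = v 1 * (1 / psi \<mu> \<sigma> b y)"
      using ratio[of b] pos_psi[of b] by (simp add: field_simps)
  qed
  also have "v 1 + (\<Sum>b=2..K. v 1 * (1 / psi \<mu> \<sigma> b y)) = v 1 * psi_norm"
    by (simp add: psi_norm_def sum_distrib_left algebra_simps)
  finally have "v 1 = 1 / psi_norm"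
    using psi_norm_pos by (simp add: field_simps)
  moreover have "v a = v 1 / psi \<mu> \<sigma> a y" if "a \<in> {2..K}"
    using ratio[OF that] pos_psi[OF that] by (simp add: field_simps)
  ultimately show ?thesis
    using a by (cases "a = 1") (auto simp: opt_weights_def)
qed

lemma optimal_closed_form:
  assumes "is_optimal K \<mu> \<sigma> v"
  shows "v 1 = 1 / (1 + (\<Sum>i=2..K. 1 / psi \<mu> \<sigma> i y))
    \<and> (\<forall>a\<in>{2..K}. v a = (1 / psi \<mu> \<sigma> a y) / (1 + (\<Sum>i=2..K. 1 / psi \<mu> \<sigma> i y)))"
  using optimal_eq_opt_weights[OF assms] two_le_K by (simp add: opt_weights_def psi_norm_def)

end

lemma Fsum_rootI:
  assumes "2 \<le> K" "\<forall>a\<in>{1..K}. \<sigma> a > 0"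
    and "\<And>a. a \<in> {2..K} \<Longrightarrow> 2 * b * (\<sigma> 1)\<^sup>2 \<le> (\<mu> 1 - \<mu> a)\<^sup>2"
    and "y \<in> {0<..<b}" "Fsum K \<mu> \<sigma> y = 1"
  shows "Fsum_root K \<mu> \<sigma> y"
proof
  fix a assume a: "a \<in> {2..K}"
  have "\<sigma> 1 > 0" "\<sigma> a > 0"
    using assms(1,2) a by auto
  then have "2 * y * (\<sigma> 1)\<^sup>2 < 2 * b * (\<sigma> 1)\<^sup>2"
    using assms(4) by simp
  then have "2 * y * (\<sigma> 1)\<^sup>2 < (\<mu> 1 - \<mu> a)\<^sup>2"
    using assms(3)[OF a] by linarith
  then show "psi \<mu> \<sigma> a y > 0"
    using \<open>\<sigma> a > 0\<close> assms(4) by (intro psi_pos) auto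
qed (use assms in auto)

lemma sq_gap_le_of_sorted:
  fixes \<mu> :: "nat \<Rightarrow> real"
  assumes "\<mu> 1 > \<mu> 2" "\<forall>a\<in>{2..<K}. \<mu> a \<ge> \<mu> (Suc a)" "a \<in> {2..K}"
  shows "(\<mu> 1 - \<mu> 2)\<^sup>2 \<le> (\<mu> 1 - \<mu> a)\<^sup>2"
  using decreasing_steps_le_start[OF assms(2,3)] assms(1) by (intro power_mono) auto

theorem lemma3:
  fixes K :: nat and \<mu> \<sigma> :: "nat \<Rightarrow> real"
  assumes K2: "2 \<le> K"
    and mu12: "\<mu> 1 > \<mu> 2"
    and mu_sorted: "\<forall>a\<in>{2..<K}. \<mu> a \<ge> \<mu> (Suc a)"
    and sigma_pos: "\<forall>a\<in>{1..K}. \<sigma> a > 0"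
  defines "b \<equiv> (\<mu> 1 - \<mu> 2)\<^sup>2 / (2 * (\<sigma> 1)\<^sup>2)"
  shows "strict_mono_on {0<..<b} (Fsum K \<mu> \<sigma>)
    \<and> (Fsum K \<mu> \<sigma> \<longlongrightarrow> 0) (at_right 0)
    \<and> filterlim (Fsum K \<mu> \<sigma>) at_top (at_left b)
    \<and> (\<exists>!y. y \<in> {0<..<b} \<and> Fsum K \<mu> \<sigma> y = 1)
    \<and> (\<exists>w. is_optimal K \<mu> \<sigma> w)
    \<and> (\<forall>y w. y \<in> {0<..<b} \<and> Fsum K \<mu> \<sigma> y = 1 \<and> is_optimal K \<mu> \<sigma> w \<longrightarrow>
          w 1 = 1 / (1 + (\<Sum>i=2..K. 1 / psi \<mu> \<sigma> i y))
          \<and> (\<forall>a\<in>{2..K}. w a = (1 / psi \<mu> \<sigma> a y) / (1 + (\<Sum>i=2..K. 1 / psi \<mu> \<sigma> i y))))"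
proof -
  have sigma_ne_0: "\<And>a. a \<in> {1..K} \<Longrightarrow> \<sigma> a \<noteq> 0"
    using sigma_pos by force
  have two_b: "2 * b * (\<sigma> 1)\<^sup>2 = (\<mu> 1 - \<mu> 2)\<^sup>2" and b_pos: "0 < b"
    using sigma_ne_0[of 1] K2 mu12 by (simp_all add: b_def)
  have gaps: "\<And>a. a \<in> {2..K} \<Longrightarrow> 2 * b * (\<sigma> 1)\<^sup>2 \<le> (\<mu> 1 - \<mu> a)\<^sup>2"
    unfolding two_b using mu12 mu_sorted by (rule sq_gap_le_of_sorted)
  have mono: "strict_mono_on {0<..<b} (Fsum K \<mu> \<sigma>)"
    using K2 sigma_ne_0 gaps by (rule Fsum_strict_mono_on)
  moreover have "(Fsum K \<mu> \<sigma> \<longlongrightarrow> 0) (at_right 0)"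
    using b_pos sigma_ne_0 gaps by (rule Fsum_tendsto_0)
  moreover have at_top: "filterlim (Fsum K \<mu> \<sigma>) at_top (at_left b)"
    using K2 sigma_ne_0 b_pos two_b by (intro Fsum_at_top[of 2]) auto
  moreover have ex1: "\<exists>!y. y \<in> {0<..<b} \<and> Fsum K \<mu> \<sigma> y = 1"
    using b_pos continuous_on_Fsum[of K \<sigma> b \<mu>, OF sigma_ne_0 gaps] mono at_top
    by (intro strict_mono_on_ex1_crossing) (auto simp: Fsum_at_0)
  moreover have root: "Fsum_root K \<mu> \<sigma> y" if "y \<in> {0<..<b}" "Fsum K \<mu> \<sigma> y = 1" for y
    using K2 sigma_pos gaps that by (rule Fsum_rootI)
  moreover have "\<exists>w. is_optimal K \<mu> \<sigma> w"
    using ex1 root Fsum_root.is_optimal_opt_weights by blast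
  ultimately show ?thesis
    using root Fsum_root.optimal_closed_form by blast
qed

end
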